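(* Let $D$ be a Dyck path of semilength $n$ and $\pi$ the permutation associated with $D$ by the Billey–Jockusch–Stanley bijection. Then for $k\in\{1,\dots,n\}$, $\pi(k)=k$ if and only if $D$ has no valley at any position $(i,j)$ with $i\le k$ and $j\ge k$.
   Context: Work in an $n\times n$ array of unit cells; the cell $(i,j)$ is the one in column $i$ (columns numbered $1,\dots,n$ from left to right) and row $j$ (rows numbered $1,\dots,n$ from bottom to top), i.e. the square $[i-1,i]\times[j-1,j]$. A Dyck path of semilength $n$ is a lattice path from $(0,0)$ to $(n,n)$ with unit north and east steps that never goes below the line $y=x$. A valley of $D$ is an east step immediately followed by a north step; if the east step is the $k$-th east step and the north step is the $\ell$-th north step of $D$, the valley is said to be at position $(k,\ell)$, namely the cell enclosed by these two steps. Billey–Jockusch–Stanley bijection: put a cross in every valley cell of $D$; then, for the columns $i=1,2,\dots,n$ in this order, if column $i$ does not yet contain a cross, put a cross in the lowest cell of column $i$whose row does not yet contain a cross. The crosses form a permutation matrix, and $\pi(i)$ is the row of the cross in column $i$. *)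

theory Defs
  imports Main
begin

text \<open>A lattice path is a list of steps: True = north step, False = east step.\<close>

definition north_steps :: "bool list \<Rightarrow> nat" where
  "north_steps xs = length (filter (\<lambda>s. s) xs)"

definition east_steps :: "bool list \<Rightarrow> nat" where
  "east_steps xs = length (filter (\<lambda>s. \<not> s) xs)"

definition dyck_path :: "nat \<Rightarrow> bool list \<Rightarrow> bool" where
  "dyck_path n D \<longleftrightarrow> length D = 2 * n \<and> north_steps D = n \<and> east_steps D = n \<and>
     (\<forall>m \<le> length D. east_steps (take m D) \<le> north_steps (take m D))"

text \<open>Valleys: an east step (the k-th east step) at index p immediately followed by a
  north step (the l-th north step); the valley is at position (k,l).\<close>
definition valleys :: "bool list \<Rightarrow> (nat \<times> nat) set" where
  "valleys D = {(east_steps (take (p + 1) D), north_steps (take (p + 2) D)) | p.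
       p + 1 < length D \<and> \<not> D ! p \<and> D ! (p + 1)}"

definition bjs_step :: "nat \<Rightarrow> (nat \<times> nat) set \<Rightarrow> nat \<Rightarrow> (nat \<times> nat) set" where
  "bjs_step n S i =
     (if \<exists>j. (i, j) \<in> S then S
      else insert (i, LEAST j. 1 \<le> j \<and> j \<le> n \<and> (\<forall>i'. (i', j) \<notin> S)) S)"

definition bjs_crosses :: "nat \<Rightarrow> bool list \<Rightarrow> (nat \<times> nat) set" where
  "bjs_crosses n D = foldl (bjs_step n) (valleys D) [1..<n + 1]"

text \<open>pi(i) is the row of the cross in column i.\<close>
definition bjs_perm :: "nat \<Rightarrow> bool list \<Rightarrow> nat \<Rightarrow> nat" where
  "bjs_perm n D i = (THE j. (i, j) \<in> bjs_crosses n D)"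

end

theory Submission
  imports Defs
begin

text \<open>The valleys of a Dyck path form a partial permutation strictly above the diagonal,
  and the Billey-Jockusch-Stanley completion matches the free columns with the free rows in
  increasing order. If column \<open>k\<close> carries a valley \<open>(k, j)\<close>, then \<open>\<pi>(k) = j > k\<close>.
  Otherwise \<open>k\<close> is the \<open>t\<close>-th free column and \<open>\<pi>(k)\<close> the \<open>t\<close>-th free row, so \<open>\<pi>(k) = k\<close>
  exactly when \<open>k\<close> is a free row and as many valleys lie in rows below \<open>k\<close> as in columns
  left of \<open>k\<close>. As every valley \<open>(i, j)\<close> has \<open>i < j\<close>, the former valleys are among the
  latter, and the counts agree iff no valley has \<open>i < k \<le> j\<close>.\<close>

lemma strict_sorted_nth_less_iff:
  fixes xs :: "'a::linorder list"
  assumes "sorted_wrt (<) xs" "i < length xs" "j < length xs"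
  shows "xs ! i < xs ! j \<longleftrightarrow> i < j"
proof
  assume "xs ! i < xs ! j"
  show "i < j"
  proof (rule ccontr)
    assume "\<not> i < j"
    then have "j < i \<or> j = i" by auto
    then show False
      using sorted_wrt_nth_less[OF assms(1), of j i] assms \<open>xs ! i < xs ! j\<close> by auto
  qed
qed (use assms sorted_wrt_nth_less in blast)

lemma card_less_strict_sorted_nth:
  fixes xs :: "'a::linorder list"
  assumes "sorted_wrt (<) xs" "t < length xs"
  shows "card {x \<in> set xs. x < xs ! t} = t"
proof -
  have "{x \<in> set xs. x < xs ! t} = (!) xs ` {..<t}"
    using assms strict_sorted_nth_less_iff[OF assms(1) _ assms(2)]
    by (auto simp: in_set_conv_nth image_iff intro: less_trans)
  moreover have "inj_on ((!) xs) {..<t}"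
  proof (rule inj_onI)
    fix i j assume "i \<in> {..<t}" "j \<in> {..<t}" "xs ! i = xs ! j"
    moreover have "distinct xs"
      using assms(1) by (simp add: strict_sorted_iff)
    ultimately show "i = j"
      using assms(2) nth_eq_iff_index_eq[of xs i j] by simp
  qed
  ultimately show ?thesis by (simp add: card_image)
qed

lemma Least_notin_take_sorted_list_of_set:
  fixes A :: "'a::linorder set"
  assumes "finite A" "r < card A"
  shows "(LEAST x. x \<in> A \<and> x \<notin> set (take r (sorted_list_of_set A))) = sorted_list_of_set A ! r"
    (is "_ = ?xs ! r")
proof (rule Least_equality)
  have sorted: "sorted_wrt (<) ?xs" and len: "r < length ?xs"
    using assms by simp_all
  have "?xs ! r \<notin> set (take r ?xs)"
  proof
    assume "?xs ! r \<in> set (take r ?xs)"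
    then obtain i where "i < r" "?xs ! i = ?xs ! r"
      using len by (auto simp: in_set_conv_nth)
    then show False
      using strict_sorted_nth_less_iff[OF sorted _ len, of i] len by simp
  qed
  then show "?xs ! r \<in> A \<and> ?xs ! r \<notin> set (take r ?xs)"
    using assms nth_mem[OF len] by simp
  fix y assume y: "y \<in> A \<and> y \<notin> set (take r ?xs)"
  then obtain t where t: "t < length ?xs" "?xs ! t = y"
    using assms by (metis in_set_conv_nth sorted_list_of_set.set_sorted_key_list_of_set)
  have "\<not> t < r"
  proof
    assume "t < r"
    then have "y \<in> set (take r ?xs)"
      using nth_mem[of t "take r ?xs"] t by simp
    with y show False by blast
  qed
  then show "?xs ! r \<le> y"
    using strict_sorted_nth_less_iff[OF sorted len t(1)] t(2) by (cases "t = r") auto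
qed

lemma strict_sorted_nth_eq_iff:
  fixes xs :: "'a::linorder list"
  assumes "sorted_wrt (<) xs" "t < length xs"
  shows "xs ! t = x \<longleftrightarrow> x \<in> set xs \<and> card {y \<in> set xs. y < x} = t"
proof
  assume "x \<in> set xs \<and> card {y \<in> set xs. y < x} = t"
  then obtain s where "s < length xs" "xs ! s = x" "card {y \<in> set xs. y < x} = t"
    by (auto simp: in_set_conv_nth)
  then show "xs ! t = x"
    using card_less_strict_sorted_nth[OF assms(1)] by metis
qed (use assms card_less_strict_sorted_nth in auto)

definition partial_perm :: "nat \<Rightarrow> (nat \<times> nat) set \<Rightarrow> bool" where
  "partial_perm n V \<longleftrightarrow> V \<subseteq> {1..n} \<times> {1..n} \<and> inj_on fst V \<and> inj_on snd V"

definition free_cols :: "nat \<Rightarrow> (nat \<times> nat) set \<Rightarrow> nat set" where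
  "free_cols n V = {1..n} - fst ` V"

definition free_rows :: "nat \<Rightarrow> (nat \<times> nat) set \<Rightarrow> nat set" where
  "free_rows n V = {1..n} - snd ` V"

lemma partial_perm_finite: "partial_perm n V \<Longrightarrow> finite V"
  unfolding partial_perm_def by (meson finite_SigmaI finite_atLeastAtMost finite_subset)

lemma card_diff_image_less:
  assumes "finite V" "inj_on f V" "f ` V \<subseteq> {1..n}" "k \<le> n + 1"
  shows "card {c \<in> {1..n} - f ` V. c < k} + card {v \<in> V. f v < k} = k - 1"
proof -
  have "{c \<in> {1..n} - f ` V. c < k} \<union> f ` {v \<in> V. f v < k} = {1..<k}"
    using assms(3,4) by auto
  moreover have "card (f ` {v \<in> V. f v < k}) = card {v \<in> V. f v < k}"
    using assms(2) by (auto intro: card_image inj_on_subset)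
  moreover have "card ({c \<in> {1..n} - f ` V. c < k} \<union> f ` {v \<in> V. f v < k})
      = card {c \<in> {1..n} - f ` V. c < k} + card (f ` {v \<in> V. f v < k})"
    using assms(1) by (intro card_Un_disjoint) auto
  ultimately show ?thesis by simp
qed

lemma card_free_cols_eq_card_free_rows:
  assumes "partial_perm n V"
  shows "card (free_cols n V) = card (free_rows n V)"
proof -
  have "fst ` V \<subseteq> {1..n}" "snd ` V \<subseteq> {1..n}" "inj_on fst V" "inj_on snd V"
    using assms unfolding partial_perm_def by auto
  then show ?thesis
    unfolding free_cols_def free_rows_def by (simp add: card_Diff_subset card_image finite_subset)
qed

lemma bjs_step_free_col:
  assumes V: "partial_perm n V" and r: "r < card (free_cols n V)"
  defines "cs \<equiv> sorted_list_of_set (free_cols n V)"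
    and "rs \<equiv> sorted_list_of_set (free_rows n V)"
  defines "S \<equiv> V \<union> (\<lambda>i. (cs ! i, rs ! i)) ` {..<r}"
  shows "bjs_step n S (cs ! r) = insert (cs ! r, rs ! r) S"
proof -
  have fin: "finite (free_cols n V)" "finite (free_rows n V)"
    by (simp_all add: free_cols_def free_rows_def)
  have r_rows: "r < length rs"
    using r card_free_cols_eq_card_free_rows[OF V] by (simp add: rs_def)
  have r_cols: "r < length cs" "sorted_wrt (<) cs"
    using r by (simp_all add: cs_def)
  have col_free: "\<nexists>j. (cs ! r, j) \<in> S"
  proof
    assume "\<exists>j. (cs ! r, j) \<in> S"
    then consider j where "(cs ! r, j) \<in> V" | i where "i < r" "cs ! i = cs ! r"
      unfolding S_def by auto
    then show False
    proof cases
      case 1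
      have "cs ! r \<in> free_cols n V"
        using nth_mem[OF r_cols(1)] fin by (simp add: cs_def)
      with 1 show False
        unfolding free_cols_def by force
    next
      case 2
      then show False
        using strict_sorted_nth_less_iff[OF r_cols(2) _ r_cols(1), of i] r_cols(1) by simp
    qed
  qed
  have "snd ` S = snd ` V \<union> set (take r rs)"
  proof -
    have "snd ` (\<lambda>i. (cs ! i, rs ! i)) ` {..<r} = (!) rs ` {..<r}"
      by (simp add: image_image)
    also have "\<dots> = set (take r rs)"
      using r_rows nth_image[of r rs] by (simp add: lessThan_atLeast0)
    finally show ?thesis
      by (simp add: S_def image_Un)
  qed
  moreover have "(\<forall>i. (i, j) \<notin> S) \<longleftrightarrow> j \<notin> snd ` S" for j
    by force
  ultimately have "(\<lambda>j. 1 \<le> j \<and> j \<le> n \<and> (\<forall>i. (i, j) \<notin> S))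
      = (\<lambda>j. j \<in> free_rows n V \<and> j \<notin> set (take r rs))"
    unfolding free_rows_def by auto
  moreover have "(LEAST j. j \<in> free_rows n V \<and> j \<notin> set (take r rs)) = rs ! r"
    using Least_notin_take_sorted_list_of_set[OF fin(2)] r_rows by (simp add: rs_def)
  ultimately show ?thesis
    using col_free by (simp add: bjs_step_def)
qed

lemma foldl_bjs_step:
  assumes V: "partial_perm n V" and "m \<le> n"
  defines "cs \<equiv> sorted_list_of_set (free_cols n V)"
    and "rs \<equiv> sorted_list_of_set (free_rows n V)"
  shows "foldl (bjs_step n) V [1..<m + 1]
           = V \<union> (\<lambda>i. (cs ! i, rs ! i)) ` {i. i < length cs \<and> cs ! i \<le> m}"
proof -
  have sorted: "sorted_wrt (<) cs" and set_cs: "set cs = free_cols n V"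
    by (simp_all add: cs_def free_cols_def)
  show ?thesis
    using \<open>m \<le> n\<close>
  proof (induction m)
    case 0
    have "cs ! i \<noteq> 0" if "i < length cs" for i
      using nth_mem[OF that] set_cs by (auto simp: free_cols_def)
    then have "{i. i < length cs \<and> cs ! i \<le> 0} = {}"
      by auto
    then show ?case
      by (simp only: image_empty Un_empty_right) simp
  next
    case (Suc m)
    let ?pair = "\<lambda>i. (cs ! i, rs ! i)"
    let ?I = "\<lambda>m. {i. i < length cs \<and> cs ! i \<le> m}"
    have "foldl (bjs_step n) V [1..<Suc m + 1] = bjs_step n (V \<union> ?pair ` ?I m) (Suc m)"
      using Suc by simp
    also have "\<dots> = V \<union> ?pair ` ?I (Suc m)"
    proof (cases "Suc m \<in> free_cols n V")
      case False
      then obtain j where "(Suc m, j) \<in> V"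
        using Suc.prems by (force simp: free_cols_def)
      then have "bjs_step n (V \<union> ?pair ` ?I m) (Suc m) = V \<union> ?pair ` ?I m"
        by (auto simp: bjs_step_def)
      moreover have "?I (Suc m) = ?I m"
        using False set_cs nth_mem by (fastforce simp: le_Suc_eq)
      ultimately show ?thesis by simp
    next
      case True
      then obtain r where r: "r < length cs" "cs ! r = Suc m"
        using set_cs by (metis in_set_conv_nth)
      have "cs ! i \<le> m \<longleftrightarrow> i < r" and "cs ! i \<le> Suc m \<longleftrightarrow> i < Suc r"
        if "i < length cs" for i
        using strict_sorted_nth_less_iff[OF sorted that r(1)]
          strict_sorted_nth_less_iff[OF sorted r(1) that] r(2) by auto
      then have "?I m = {..<r}" and "?I (Suc m) = {..<Suc r}"
        using r(1) by (auto intro: less_trans order.strict_trans2)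
      then show ?thesis
        using bjs_step_free_col[OF V, of r] r by (simp add: cs_def rs_def lessThan_Suc Un_insert_right)
    qed
    finally show ?case .
  qed
qed

lemma bjs_completion:
  assumes V: "partial_perm n V"
  defines "cs \<equiv> sorted_list_of_set (free_cols n V)"
    and "rs \<equiv> sorted_list_of_set (free_rows n V)"
  shows "foldl (bjs_step n) V [1..<n + 1] = V \<union> (\<lambda>i. (cs ! i, rs ! i)) ` {..<length cs}"
proof -
  have "cs ! i \<le> n" if "i < length cs" for i
    using nth_mem[OF that] by (simp add: cs_def free_cols_def)
  then have "{i. i < length cs \<and> cs ! i \<le> n} = {..<length cs}"
    by auto
  then show ?thesis
    using foldl_bjs_step[OF V order.refl] by (simp add: cs_def rs_def)
qed

lemma bjs_completion_inj_on_fst: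
  assumes V: "partial_perm n V"
  shows "inj_on fst (foldl (bjs_step n) V [1..<n + 1])"
proof -
  define cs where "cs = sorted_list_of_set (free_cols n V)"
  define rs where "rs = sorted_list_of_set (free_rows n V)"
  have "distinct cs" "set cs = free_cols n V"
    by (simp_all add: cs_def free_cols_def)
  then have "inj_on fst ((\<lambda>i. (cs ! i, rs ! i)) ` {..<length cs})"
    by (auto intro!: inj_onI simp: nth_eq_iff_index_eq)
  moreover have "fst ` V \<inter> fst ` (\<lambda>i. (cs ! i, rs ! i)) ` {..<length cs} = {}"
    using \<open>set cs = free_cols n V\<close> nth_mem by (fastforce simp: free_cols_def)
  ultimately show ?thesis
    using V bjs_completion[OF V] by (simp add: partial_perm_def inj_on_Un cs_def rs_def) blast
qed

lemma bjs_completion_the_row: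
  assumes V: "partial_perm n V" and kj: "(k, j) \<in> foldl (bjs_step n) V [1..<n + 1]"
  shows "(THE j. (k, j) \<in> foldl (bjs_step n) V [1..<n + 1]) = j"
  using bjs_completion_inj_on_fst[OF V] kj
  by (auto intro!: the_equality dest: inj_onD[of fst _ "(k, _)" "(k, j)"])

lemma bjs_completion_free_col_fixed_iff:
  assumes V: "partial_perm n V" and k: "k \<in> free_cols n V"
  shows "(THE j. (k, j) \<in> foldl (bjs_step n) V [1..<n + 1]) = k
           \<longleftrightarrow> k \<in> free_rows n V \<and> card {v \<in> V. snd v < k} = card {v \<in> V. fst v < k}"
proof -
  define cs where "cs = sorted_list_of_set (free_cols n V)"
  define rs where "rs = sorted_list_of_set (free_rows n V)"
  have fin: "finite V" "finite (free_cols n V)" "finite (free_rows n V)"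
    using partial_perm_finite[OF V] by (simp_all add: free_cols_def free_rows_def)
  have V_bounds: "inj_on fst V" "inj_on snd V" "fst ` V \<subseteq> {1..n}" "snd ` V \<subseteq> {1..n}"
    using V by (auto simp: partial_perm_def)
  obtain t where t: "t < length cs" "cs ! t = k"
    using k fin by (metis cs_def in_set_conv_nth sorted_list_of_set.set_sorted_key_list_of_set)
  then have "(k, rs ! t) \<in> foldl (bjs_step n) V [1..<n + 1]"
    using bjs_completion[OF V] by (force simp: cs_def rs_def)
  then have "(THE j. (k, j) \<in> foldl (bjs_step n) V [1..<n + 1]) = rs ! t"
    by (rule bjs_completion_the_row[OF V])
  moreover have "t = card {c \<in> free_cols n V. c < k}"
    using card_less_strict_sorted_nth[of cs t] t fin by (simp add: cs_def)
  moreover have "t < length rs"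
    using t card_free_cols_eq_card_free_rows[OF V] by (simp add: cs_def rs_def)
  ultimately have "(THE j. (k, j) \<in> foldl (bjs_step n) V [1..<n + 1]) = k
      \<longleftrightarrow> k \<in> free_rows n V \<and> card {r \<in> free_rows n V. r < k} = card {c \<in> free_cols n V. c < k}"
    using strict_sorted_nth_eq_iff[of rs t k] fin by (simp add: rs_def)
  also have "\<dots> \<longleftrightarrow> k \<in> free_rows n V \<and> card {v \<in> V. snd v < k} = card {v \<in> V. fst v < k}"
    using card_diff_image_less[OF fin(1) V_bounds(1,3), of k]
      card_diff_image_less[OF fin(1) V_bounds(2,4), of k] k
    by (auto simp: free_cols_def free_rows_def)
  finally show ?thesis .
qed

lemma card_snd_less_eq_card_fst_less_iff:
  fixes V :: "('a::linorder \<times> 'a) set"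
  assumes "finite V" and above: "\<And>i j. (i, j) \<in> V \<Longrightarrow> i < j"
  shows "card {v \<in> V. snd v < k} = card {v \<in> V. fst v < k} \<longleftrightarrow> (\<forall>(i, j) \<in> V. i < k \<longrightarrow> j < k)"
proof -
  have sub: "{v \<in> V. snd v < k} \<subseteq> {v \<in> V. fst v < k}"
  proof
    fix v assume "v \<in> {v \<in> V. snd v < k}"
    with above[of "fst v" "snd v"] show "v \<in> {v \<in> V. fst v < k}"
      by (auto intro: less_trans)
  qed
  have "card {v \<in> V. snd v < k} = card {v \<in> V. fst v < k}
      \<longleftrightarrow> {v \<in> V. snd v < k} = {v \<in> V. fst v < k}"
    using card_subset_eq[OF _ sub] assms(1) by auto
  also have "\<dots> \<longleftrightarrow> (\<forall>(i, j) \<in> V. i < k \<longrightarrow> j < k)"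
    using sub by (auto simp: set_eq_iff)
  finally show ?thesis .
qed

lemma straddle_free_iff:
  fixes V :: "('a::linorder \<times> 'a) set"
  assumes above: "\<And>i j. (i, j) \<in> V \<Longrightarrow> i < j" and "k \<notin> fst ` V"
  shows "k \<notin> snd ` V \<and> (\<forall>(i, j) \<in> V. i < k \<longrightarrow> j < k)
           \<longleftrightarrow> (\<nexists>i j. (i, j) \<in> V \<and> i \<le> k \<and> k \<le> j)"
proof
  assume closed_below: "k \<notin> snd ` V \<and> (\<forall>(i, j) \<in> V. i < k \<longrightarrow> j < k)"
  show "\<nexists>i j. (i, j) \<in> V \<and> i \<le> k \<and> k \<le> j"
  proof
    assume "\<exists>i j. (i, j) \<in> V \<and> i \<le> k \<and> k \<le> j"
    then obtain i j where ij: "(i, j) \<in> V" "i \<le> k" "k \<le> j"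
      by blast
    then have "i \<noteq> k"
      using assms(2) by force
    with ij closed_below show False
      by fastforce
  qed
next
  assume no_straddle: "\<nexists>i j. (i, j) \<in> V \<and> i \<le> k \<and> k \<le> j"
  have "k \<notin> snd ` V"
  proof
    assume "k \<in> snd ` V"
    then obtain i where "(i, k) \<in> V"
      by force
    with above[OF this] no_straddle show False
      using less_imp_le by blast
  qed
  moreover have "j < k" if "(i, j) \<in> V" "i < k" for i j
    using that no_straddle not_less less_imp_le by blast
  ultimately show "k \<notin> snd ` V \<and> (\<forall>(i, j) \<in> V. i < k \<longrightarrow> j < k)"
    by blast
qed

lemma bjs_fixed_point_iff:
  assumes V: "partial_perm n V" and above: "\<And>i j. (i, j) \<in> V \<Longrightarrow> i < j"
    and k: "1 \<le> k" "k \<le> n"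
  shows "(THE j. (k, j) \<in> foldl (bjs_step n) V [1..<n + 1]) = k
           \<longleftrightarrow> (\<nexists>i j. (i, j) \<in> V \<and> i \<le> k \<and> k \<le> j)"
proof (cases "k \<in> fst ` V")
  case True
  then obtain j where kj: "(k, j) \<in> V"
    by force
  then have "(THE j. (k, j) \<in> foldl (bjs_step n) V [1..<n + 1]) = j"
    using bjs_completion[OF V] by (intro bjs_completion_the_row[OF V]) simp
  moreover have "\<exists>i j. (i, j) \<in> V \<and> i \<le> k \<and> k \<le> j"
    using kj above[OF kj] by (blast intro: less_imp_le)
  ultimately show ?thesis
    using above[OF kj] by simp
next
  case False
  then have "k \<in> free_cols n V"
    using k by (simp add: free_cols_def)
  moreover have "k \<in> free_rows n V \<longleftrightarrow> k \<notin> snd ` V"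
    using k by (simp add: free_rows_def)
  ultimately show ?thesis
    using bjs_completion_free_col_fixed_iff[OF V]
      card_snd_less_eq_card_fst_less_iff[OF partial_perm_finite[OF V] above]
      straddle_free_iff[OF above False]
    by simp
qed

lemma length_filter_take_le: "length (filter P (take m xs)) \<le> length (filter P xs)"
proof -
  have "length (filter P xs) = length (filter P (take m xs)) + length (filter P (drop m xs))"
    by (metis append_take_drop_id filter_append length_append)
  then show ?thesis by simp
qed

lemma length_filter_take_mono:
  "m \<le> m' \<Longrightarrow> length (filter P (take m xs)) \<le> length (filter P (take m' xs))"
  using length_filter_take_le[of P m "take m' xs"] by (simp add: min.absorb1)

lemma north_steps_take_Suc:
  "p < length D \<Longrightarrow> north_steps (take (Suc p) D) = north_steps (take p D) + (if D ! p then 1 else 0)"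
  by (simp add: north_steps_def take_Suc_conv_app_nth)

lemma east_steps_take_Suc:
  "p < length D \<Longrightarrow> east_steps (take (Suc p) D) = east_steps (take p D) + (if D ! p then 0 else 1)"
  by (simp add: east_steps_def take_Suc_conv_app_nth)

definition valley_at :: "bool list \<Rightarrow> nat \<Rightarrow> bool" where
  "valley_at D p \<longleftrightarrow> p + 1 < length D \<and> \<not> D ! p \<and> D ! (p + 1)"

lemma valleys_eq:
  "valleys D = (\<lambda>p. (east_steps (take p D) + 1, north_steps (take p D) + 1)) ` {p. valley_at D p}"
proof -
  have "east_steps (take (p + 1) D) = east_steps (take p D) + 1"
    and "north_steps (take (p + 2) D) = north_steps (take p D) + 1" if "valley_at D p" for p
    using that east_steps_take_Suc[of p D] north_steps_take_Suc[of p D]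
      north_steps_take_Suc[of "Suc p" D] by (auto simp: valley_at_def)
  moreover have "valleys D
      = (\<lambda>p. (east_steps (take (p + 1) D), north_steps (take (p + 2) D))) ` {p. valley_at D p}"
    unfolding valleys_def valley_at_def by blast
  ultimately show ?thesis
    by (auto intro!: image_cong)
qed

lemma valley_coords_strict_mono:
  assumes "valley_at D p" "valley_at D q" "p < q"
  shows "east_steps (take p D) < east_steps (take q D) \<and> north_steps (take p D) < north_steps (take q D)"
proof -
  have "q \<noteq> Suc p"
    using assms(1,2) unfolding valley_at_def by auto
  then have "Suc (Suc p) \<le> q"
    using assms(3) by simp
  then have "east_steps (take (Suc p) D) \<le> east_steps (take q D)"
    and "north_steps (take (Suc (Suc p)) D) \<le> north_steps (take q D)"
    unfolding east_steps_def north_steps_def by (auto intro: length_filter_take_mono)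
  moreover have "east_steps (take (Suc p) D) = east_steps (take p D) + 1"
    and "north_steps (take (Suc (Suc p)) D) = north_steps (take p D) + 1"
    using assms(1) east_steps_take_Suc[of p D] north_steps_take_Suc[of p D]
      north_steps_take_Suc[of "Suc p" D] by (auto simp: valley_at_def)
  ultimately show ?thesis by simp
qed

lemma valley_coords_inj:
  assumes "valley_at D p" "valley_at D q"
    and "east_steps (take p D) = east_steps (take q D) \<or> north_steps (take p D) = north_steps (take q D)"
  shows "p = q"
  using valley_coords_strict_mono[OF assms(1,2)] valley_coords_strict_mono[OF assms(2,1)] assms(3)
  by (cases p q rule: linorder_cases) auto

lemma valley_in_square:
  assumes "dyck_path n D" "valley_at D p"
  shows "east_steps (take p D) < north_steps (take p D) \<and> north_steps (take p D) < n"
proof -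
  have "east_steps (take (Suc p) D) \<le> north_steps (take (Suc p) D)"
    using assms unfolding dyck_path_def valley_at_def by simp
  moreover have "north_steps (take (Suc (Suc p)) D) \<le> north_steps D"
    unfolding north_steps_def by (rule length_filter_take_le)
  ultimately show ?thesis
    using assms east_steps_take_Suc[of p D] north_steps_take_Suc[of p D]
      north_steps_take_Suc[of "Suc p" D] by (auto simp: valley_at_def dyck_path_def)
qed

lemma valleys_above_diagonal: "dyck_path n D \<Longrightarrow> (i, j) \<in> valleys D \<Longrightarrow> i < j"
  using valley_in_square by (fastforce simp: valleys_eq)

lemma valleys_partial_perm:
  assumes "dyck_path n D"
  shows "partial_perm n (valleys D)"
proof -
  have "valleys D \<subseteq> {1..n} \<times> {1..n}"
    using valley_in_square[OF assms] by (fastforce simp: valleys_eq)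
  moreover have "inj_on fst (valleys D)" "inj_on snd (valleys D)"
    unfolding valleys_eq
    by (auto intro!: inj_on_imageI inj_onI simp: comp_def dest: valley_coords_inj)
  ultimately show ?thesis
    by (simp add: partial_perm_def)
qed

theorem mainTheorem2:
  fixes n k :: nat and D :: "bool list"
  assumes "dyck_path n D" and "1 \<le> k" and "k \<le> n"
  shows "bjs_perm n D k = k \<longleftrightarrow>
           \<not> (\<exists>i j. (i, j) \<in> valleys D \<and> i \<le> k \<and> k \<le> j)"
  unfolding bjs_perm_def bjs_crosses_def
  by (rule bjs_fixed_point_iff[OF valleys_partial_perm[OF assms(1)]
        valleys_above_diagonal[OF assms(1)] assms(2,3)])

end
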